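(* Let $\alpha,\gamma\in\mathbb{R}$, $b\in(0,\infty)$ satisfy $\alpha<\gamma$, let $(\Omega,\mathcal{F},\mathbb{P})$ be a probability space, for every $h\in\mathbb{N}$ let $B^h_n\colon\Omega\to\mathbb{R}$, $n\in\{1,\dots,h\}$, and $W^h_n\colon\Omega\to\mathbb{R}$, $n\in\{1,\dots,h\}$, be random variables, and assume for all $h\in\mathbb{N}$, $n\in\{1,\dots,h\}$, $x\in\mathbb{R}$ that $B^h_1,\dots,B^h_h,W^h_1,\dots,W^h_h$ are independent, that $h^\gamma B^h_n$ is standard normal, and that $\mathbb{P}(h^\alpha W^h_n\ge x)=\int_{\max\{x,0\}}^\infty[\tfrac2\pi]^{1/2}\exp(-\tfrac{y^2}{2})\,\mathrm{d}y$. Then for all $h\in\mathbb{N}\cap[(2/(\pi b))^{1/(\gamma-\alpha)},\infty)$ and $\kappa\in\{1,\dots,h\}$ it holds that $$\mathbb{P}\Big(\min_{n\in\{1,\dots,\kappa\}}\big(B^h_n/W^h_n\big)>-b\Big)\ge1-\frac{2\kappa}{\pi b}h^{\alpha-\gamma}.$$ *)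

theory Defs
  imports "HOL-Probability.Probability"
begin

end

theory Submission
  imports Defs
begin

(* Put c = h powr (alpha - gamma) / b. On the event B/W <= -b one has h^alpha W <= c |h^gamma B|.
   The variable Y = h^alpha W is half-normal, so its density is bounded by sqrt (2/pi) and
   P(Y <= t) <= sqrt (2/pi) t for t >= 0. Integrating this bound against the law of the independent
   standard normal X = h^gamma B gives P(Y <= c |X|) <= sqrt (2/pi) c E|X| = 2c/pi, and a union
   bound over the first kappa indices yields the claim. *)

lemma (in prob_space) indep_var_of_indep_vars:
  assumes "indep_vars M' X I" "i \<in> I" "j \<in> I" "i \<noteq> j"
  shows "indep_var (M' i) (X i) (M' j) (X j)"
proof -
  have "indep_var (PiM {i} M') (\<lambda>\<omega>. restrict (\<lambda>k. X k \<omega>) {i})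
      (PiM {j} M') (\<lambda>\<omega>. restrict (\<lambda>k. X k \<omega>) {j})"
    using assms by (intro indep_var_restrict) auto
  from indep_var_compose[OF this measurable_component_singleton measurable_component_singleton]
  show ?thesis
    by (simp add: o_def)
qed

lemma (in prob_space) prob_le_linear_of_tail_integral:
  fixes Y :: "'a \<Rightarrow> real" and f :: "real \<Rightarrow> real"
  assumes [measurable]: "Y \<in> borel_measurable M"
    and f_int: "set_integrable lborel {0..} f"
    and f_le: "\<And>y. y \<ge> 0 \<Longrightarrow> f y \<le> C"
    and tail: "\<And>x. prob {\<omega>\<in>space M. Y \<omega> \<ge> x} = (LBINT y:{max x 0..}. f y)"
    and t: "t \<ge> 0"
  shows "prob {\<omega>\<in>space M. Y \<omega> \<le> t} \<le> C * t"
proof -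
  have "(\<lambda>n. prob {\<omega>\<in>space M. Y \<omega> \<ge> - real n})
      \<longlonglongrightarrow> prob (\<Union>n. {\<omega>\<in>space M. Y \<omega> \<ge> - real n})"
    by (rule finite_Lim_measure_incseq) (auto simp: incseq_def)
  moreover have "(\<Union>n. {\<omega>\<in>space M. Y \<omega> \<ge> - real n}) = space M"
    by auto (metis minus_le_iff real_arch_simple)
  ultimately have total: "(LBINT y:{0..}. f y) = 1"
    using LIMSEQ_unique[OF tendsto_const] by (simp add: tail prob_space)
  have "prob {\<omega>\<in>space M. Y \<omega> \<le> t} \<le> C * s" if "s > t" for s
  proof -
    have split: "(LBINT y:{0..}. f y) = (LBINT y:{0..<s}. f y) + (LBINT y:{s..}. f y)"
      using that t f_int
      by (subst set_integral_Un[symmetric]) (auto intro: set_integrable_subset simp: ivl_disj_un)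
    have "prob {\<omega>\<in>space M. Y \<omega> \<le> t} \<le> prob {\<omega>\<in>space M. Y \<omega> < s}"
      using that by (intro finite_measure_mono) auto
    also have "\<dots> = prob (space M - {\<omega>\<in>space M. Y \<omega> \<ge> s})"
      by (rule arg_cong[where f=prob]) auto
    also have "\<dots> = 1 - prob {\<omega>\<in>space M. Y \<omega> \<ge> s}"
      by (rule prob_compl) measurable
    also have "\<dots> = (LBINT y:{0..<s}. f y)"
      using split total that t by (simp add: tail)
    also have "\<dots> \<le> (LBINT y:{0..<s}. C)"
    proof (rule set_integral_mono)
      show "set_integrable lborel {0..<s} f"
        using f_int by (rule set_integrable_subset) auto
      show "set_integrable lborel {0..<s} (\<lambda>_. C)"
        using that t unfolding set_integrable_def
        by (auto simp: mult.commute[of _ C])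
    qed (use f_le in auto)
    also have "\<dots> = C * s"
      using that t by (simp add: set_integral_const)
    finally show ?thesis .
  qed
  moreover have "((\<lambda>s. C * s) \<longlongrightarrow> C * t) (at_right t)"
    by (intro tendsto_intros)
  ultimately show ?thesis
    by (intro tendsto_lowerbound[OF _ _ trivial_limit_at_right_real])
       (auto intro: eventually_mono[OF eventually_at_right_less])
qed

lemma half_normal_density_eq: "sqrt (2 / pi) * exp (- (y\<^sup>2) / 2) = 2 * std_normal_density y"
proof -
  have "sqrt (2 / pi) = 2 / sqrt (2 * pi)"
    by (simp add: real_sqrt_divide real_sqrt_mult field_simps)
  then show ?thesis
    by (simp add: std_normal_density_def)
qed

lemma (in prob_space) prob_le_linear_half_normal:
  fixes Y :: "'a \<Rightarrow> real"
  assumes "Y \<in> borel_measurable M"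
    and tail: "\<And>x. prob {\<omega>\<in>space M. Y \<omega> \<ge> x} = (LBINT y:{max x 0..}. sqrt (2 / pi) * exp (- (y\<^sup>2) / 2))"
    and "t \<ge> 0"
  shows "prob {\<omega>\<in>space M. Y \<omega> \<le> t} \<le> sqrt (2 / pi) * t"
proof (rule prob_le_linear_of_tail_integral[OF assms(1) _ _ tail \<open>t \<ge> 0\<close>])
  have "integrable lborel (\<lambda>y. 2 * std_normal_density y)"
    using integrable_std_normal_moment[of 0] by simp
  then show "set_integrable lborel {0..} (\<lambda>y. sqrt (2 / pi) * exp (- (y\<^sup>2) / 2))"
    unfolding set_integrable_def half_normal_density_eq by (intro integrable_mult_indicator) auto
qed simp

lemma (in prob_space) expectation_abs_std_normal:
  fixes X :: "'a \<Rightarrow> real"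
  assumes X: "distributed M lborel X (\<lambda>x. ennreal (std_normal_density x))"
  shows "integrable M (\<lambda>\<omega>. \<bar>X \<omega>\<bar>)" and "expectation (\<lambda>\<omega>. \<bar>X \<omega>\<bar>) = sqrt (2 / pi)"
proof -
  have "integrable lborel (\<lambda>x. std_normal_density x * \<bar>x\<bar>)"
    using integrable_std_normal_moment_abs[of 1] by simp
  then show "integrable M (\<lambda>\<omega>. \<bar>X \<omega>\<bar>)"
    using distributed_integrable[OF X, of abs] by simp
  have "expectation (\<lambda>\<omega>. \<bar>X \<omega>\<bar>) = (\<integral>x. std_normal_density x * \<bar>x\<bar> \<partial>lborel)"
    using distributed_integral[OF X, of abs] by simp
  also have "\<dots> = sqrt (2 / pi)"
    using integral_std_normal_moment_abs_odd[of 0] by simp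
  finally show "expectation (\<lambda>\<omega>. \<bar>X \<omega>\<bar>) = sqrt (2 / pi)" .
qed

lemma (in prob_space) prob_le_abs_le_expectation:
  fixes X Y :: "'a \<Rightarrow> real"
  assumes ind: "indep_var borel X borel Y"
    and X_int: "integrable M (\<lambda>\<omega>. \<bar>X \<omega>\<bar>)"
    and Y_small: "\<And>t. t \<ge> 0 \<Longrightarrow> prob {\<omega>\<in>space M. Y \<omega> \<le> t} \<le> c * t"
  shows "prob {\<omega>\<in>space M. Y \<omega> \<le> \<bar>X \<omega>\<bar>} \<le> c * expectation (\<lambda>\<omega>. \<bar>X \<omega>\<bar>)"
proof -
  have [measurable]: "X \<in> borel_measurable M" "Y \<in> borel_measurable M"
    using indep_var_rv1[OF ind] indep_var_rv2[OF ind] by auto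
  have c: "c \<ge> 0"
    using Y_small[of 1] measure_nonneg[of M "{\<omega>\<in>space M. Y \<omega> \<le> 1}"] by linarith
  interpret PY: prob_space "distr M borel Y"
    by (rule prob_space_distr) simp
  have joint: "distr M (borel \<Otimes>\<^sub>M borel) (\<lambda>\<omega>. (X \<omega>, Y \<omega>))
      = distr M borel X \<Otimes>\<^sub>M distr M borel Y"
    using ind by (simp add: indep_var_distribution_eq)
  define S where "S = {p::real \<times> real. snd p \<le> \<bar>fst p\<bar>}"
  have "S = {p \<in> space (borel \<Otimes>\<^sub>M borel). snd p \<le> \<bar>fst p\<bar>}"
    by (simp add: S_def space_pair_measure)
  then have S[measurable]: "S \<in> sets (borel \<Otimes>\<^sub>M borel)"
    by simp
  have "emeasure M {\<omega>\<in>space M. Y \<omega> \<le> \<bar>X \<omega>\<bar>}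
      = emeasure (distr M (borel \<Otimes>\<^sub>M borel) (\<lambda>\<omega>. (X \<omega>, Y \<omega>))) S"
    by (subst emeasure_distr, simp_all) (auto simp: S_def intro!: arg_cong[where f="emeasure M"])
  also have "\<dots> = (\<integral>\<^sup>+x. emeasure (distr M borel Y) (Pair x -` S) \<partial>distr M borel X)"
    by (simp add: joint PY.emeasure_pair_measure_alt)
  also have "\<dots> \<le> (\<integral>\<^sup>+x. ennreal (c * \<bar>x\<bar>) \<partial>distr M borel X)"
  proof (rule nn_integral_mono)
    fix x :: real
    have "emeasure (distr M borel Y) (Pair x -` S) = prob {\<omega>\<in>space M. Y \<omega> \<le> \<bar>x\<bar>}"
      by (subst emeasure_distr, simp_all) (auto simp: S_def emeasure_eq_measure intro!: arg_cong[where f=prob])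
    then show "emeasure (distr M borel Y) (Pair x -` S) \<le> ennreal (c * \<bar>x\<bar>)"
      by (simp add: Y_small ennreal_leI)
  qed
  also have "\<dots> = (\<integral>\<^sup>+\<omega>. ennreal (c * \<bar>X \<omega>\<bar>) \<partial>M)"
    by (simp add: nn_integral_distr)
  also have "\<dots> = ennreal (c * expectation (\<lambda>\<omega>. \<bar>X \<omega>\<bar>))"
    using X_int c by (subst nn_integral_eq_integral) auto
  finally show ?thesis
    using c by (simp add: emeasure_eq_measure)
qed

lemma ratio_le_neg_imp_le_abs:
  fixes p q b \<beta> w :: real
  assumes "p > 0" "q > 0" "b > 0" and ratio: "\<beta> / w \<le> - b"
  shows "q * w \<le> \<bar>q / (b * p) * (p * \<beta>)\<bar>"
proof -
  have "w \<noteq> 0"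
    using ratio \<open>b > 0\<close> by auto
  then have "b * \<bar>w\<bar> \<le> \<bar>\<beta>\<bar>"
    using ratio \<open>b > 0\<close> by (auto simp: field_simps abs_if split: if_splits)
  have "q * w \<le> q * \<bar>w\<bar>"
    using \<open>q > 0\<close> by simp
  also have "\<dots> \<le> q * (\<bar>\<beta>\<bar> / b)"
    using \<open>b * \<bar>w\<bar> \<le> \<bar>\<beta>\<bar>\<close> assms by (simp add: field_simps)
  also have "\<dots> = \<bar>q / (b * p) * (p * \<beta>)\<bar>"
    using assms by (simp add: abs_mult)
  finally show ?thesis .
qed

lemma (in prob_space) prob_ratio_le_neg:
  fixes B W :: "'a \<Rightarrow> real" and p q b :: real
  assumes ind: "indep_var borel B borel W" and "p > 0" "q > 0" "b > 0"
    and B_normal: "distributed M lborel (\<lambda>\<omega>. p * B \<omega>) (\<lambda>x. ennreal (std_normal_density x))"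
    and W_small: "\<And>t. t \<ge> 0 \<Longrightarrow> prob {\<omega>\<in>space M. q * W \<omega> \<le> t} \<le> sqrt (2 / pi) * t"
  shows "prob {\<omega>\<in>space M. B \<omega> / W \<omega> \<le> - b} \<le> 2 * q / (pi * b * p)"
proof -
  define k where "k = q / (b * p)"
  have k: "k \<ge> 0"
    using assms by (simp add: k_def)
  have [measurable]: "B \<in> borel_measurable M" "W \<in> borel_measurable M"
    using indep_var_rv1[OF ind] indep_var_rv2[OF ind] by auto
  have ind': "indep_var borel (\<lambda>\<omega>. k * (p * B \<omega>)) borel (\<lambda>\<omega>. q * W \<omega>)"
    using indep_var_compose[OF ind, of "\<lambda>x. k * (p * x)" borel "\<lambda>x. q * x" borel] by (simp add: o_def)
  have int: "integrable M (\<lambda>\<omega>. \<bar>k * (p * B \<omega>)\<bar>)"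
    using integrable_mult_right[OF expectation_abs_std_normal(1)[OF B_normal], of k] k
    by (simp add: abs_mult)
  have "{\<omega>\<in>space M. B \<omega> / W \<omega> \<le> - b} \<subseteq> {\<omega>\<in>space M. q * W \<omega> \<le> \<bar>k * (p * B \<omega>)\<bar>}"
    using ratio_le_neg_imp_le_abs[OF \<open>p > 0\<close> \<open>q > 0\<close> \<open>b > 0\<close>] unfolding k_def by blast
  then have "prob {\<omega>\<in>space M. B \<omega> / W \<omega> \<le> - b}
      \<le> prob {\<omega>\<in>space M. q * W \<omega> \<le> \<bar>k * (p * B \<omega>)\<bar>}"
    by (rule finite_measure_mono) measurable
  also have "\<dots> \<le> sqrt (2 / pi) * expectation (\<lambda>\<omega>. \<bar>k * (p * B \<omega>)\<bar>)"
    by (rule prob_le_abs_le_expectation[OF ind' int W_small])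
  also have "\<dots> = sqrt (2 / pi) * (k * sqrt (2 / pi))"
    using expectation_abs_std_normal(2)[OF B_normal] k by (simp add: abs_mult)
  also have "\<dots> = 2 * q / (pi * b * p)"
    by (simp add: k_def field_simps flip: power2_eq_square)
  finally show ?thesis .
qed

theorem lemma3p16:
  fixes M :: "'a measure"
    and \<alpha> \<gamma> b :: real
    and B W :: "nat \<Rightarrow> nat \<Rightarrow> 'a \<Rightarrow> real"
  assumes "\<alpha> < \<gamma>" and "b > 0"
    and "prob_space M"
    and indep: "\<And>h. h \<ge> 1 \<Longrightarrow> prob_space.indep_vars M (\<lambda>_. borel)
              (\<lambda>i. case i of Inl n \<Rightarrow> B h n | Inr n \<Rightarrow> W h n) ({1..h} <+> {1..h})"
    and Bnormal: "\<And>h n. h \<ge> 1 \<Longrightarrow> n \<in> {1..h} \<Longrightarrow>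
              distributed M lborel (\<lambda>\<omega>. real h powr \<gamma> * B h n \<omega>) (\<lambda>x. ennreal (std_normal_density x))"
    and Whalf: "\<And>h n x. h \<ge> 1 \<Longrightarrow> n \<in> {1..h} \<Longrightarrow>
              measure M {\<omega> \<in> space M. real h powr \<alpha> * W h n \<omega> \<ge> x}
                = (LBINT y:{max x 0..}. sqrt (2 / pi) * exp (- (y\<^sup>2) / 2))"
  shows "\<And>h \<kappa>. h \<ge> 1 \<Longrightarrow> real h \<ge> (2 / (pi * b)) powr (1 / (\<gamma> - \<alpha>)) \<Longrightarrow> \<kappa> \<in> {1..h} \<Longrightarrow>
           measure M {\<omega> \<in> space M. Min ((\<lambda>n. B h n \<omega> / W h n \<omega>) ` {1..\<kappa>}) > - b}
             \<ge> 1 - 2 * real \<kappa> / (pi * b) * real h powr (\<alpha> - \<gamma>)"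
proof -
  interpret prob_space M by fact
  fix h \<kappa> :: nat
  \<comment> \<open>The lower bound on \<open>h\<close> and \<open>\<alpha> < \<gamma>\<close> only serve to make the right-hand side
    nonnegative; the estimate holds without them.\<close>
  assume h: "h \<ge> 1" and "real h \<ge> (2 / (pi * b)) powr (1 / (\<gamma> - \<alpha>))" and \<kappa>: "\<kappa> \<in> {1..h}"
  define E where "E n = {\<omega>\<in>space M. B h n \<omega> / W h n \<omega> \<le> - b}" for n
  have ind: "indep_var borel (B h n) borel (W h n)" if "n \<in> {1..h}" for n
    using indep_var_of_indep_vars[OF indep[OF h] InlI[OF that] InrI[OF that]] by simp
  have E_events: "E n \<in> events" if "n \<in> {1..h}" for n
    using indep_var_rv1[OF ind[OF that]] indep_var_rv2[OF ind[OF that]] unfolding E_def by measurable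
  have E_le: "prob (E n) \<le> 2 * real h powr \<alpha> / (pi * b * real h powr \<gamma>)" if n: "n \<in> {1..h}" for n
    unfolding E_def
  proof (rule prob_ratio_le_neg[OF ind[OF n] _ _ \<open>b > 0\<close> Bnormal[OF h n]])
    fix t :: real assume "t \<ge> 0"
    then show "prob {\<omega>\<in>space M. real h powr \<alpha> * W h n \<omega> \<le> t} \<le> sqrt (2 / pi) * t"
      using indep_var_rv2[OF ind[OF n]] by (intro prob_le_linear_half_normal Whalf[OF h n]) auto
  qed (use h in auto)
  have "{\<omega>\<in>space M. Min ((\<lambda>n. B h n \<omega> / W h n \<omega>) ` {1..\<kappa>}) > - b}
      = space M - (\<Union>n\<in>{1..\<kappa>}. E n)"
    using \<kappa> by (auto simp: E_def Min_gr_iff)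
  moreover have "prob (\<Union>n\<in>{1..\<kappa>}. E n) \<le> (\<Sum>n\<in>{1..\<kappa>}. prob (E n))"
    using E_events \<kappa> by (intro finite_measure_subadditive_finite) auto
  moreover have "(\<Sum>n\<in>{1..\<kappa>}. prob (E n)) \<le> 2 * real \<kappa> / (pi * b) * real h powr (\<alpha> - \<gamma>)"
    using sum_mono[of "{1..\<kappa>}", OF E_le] \<kappa> by (simp add: powr_diff field_simps)
  moreover have "(\<Union>n\<in>{1..\<kappa>}. E n) \<in> events"
    using E_events \<kappa> by auto
  ultimately show "measure M {\<omega> \<in> space M. Min ((\<lambda>n. B h n \<omega> / W h n \<omega>) ` {1..\<kappa>}) > - b}
      \<ge> 1 - 2 * real \<kappa> / (pi * b) * real h powr (\<alpha> - \<gamma>)"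
    by (simp add: prob_compl)
qed

end
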